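(* For every $d\ge 2$, $p_c^{\operatorname{face}}(d+1)\le p_c^{\operatorname{face}}(d)$.
   Context: For $m\ge2$, a face in $\mathbb{R}^m$ is an $(m-1)$-dimensional elementary cube, i.e. a product $I_1\times\cdots\times I_m$ of intervals $[l,l]$ or $[l,l+1]$ ($l\in\mathbb{Z}$) with exactly one degenerate factor. Two faces $Q,Q'$ are adjacent if $Q\cap Q'$ is an $(m-2)$-dimensional elementary cube. In face percolation on $\mathbb{R}^m$ with parameter $p$, each face is open independently with probability $p$ (product measure $P_p$). $C(Q)$ is the set of open faces connected to $Q$ by chains of successively adjacent open faces, $Q_0=[0,0]\times[0,1]^{m-1}$, $\theta^{\operatorname{face}}(p)=P_p(|C(Q_0)|=\infty)$, and $p_c^{\operatorname{face}}(m)=\inf\{p:\theta^{\operatorname{face}}(p)>0\}$. *)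

theory Defs
  imports "HOL-Probability.Probability"
begin

text \<open>Points of R^m are represented as functions nat => real vanishing at coordinates >= m.\<close>

type_synonym point = "nat \<Rightarrow> real"
type_synonym cube = "point set"

definition cube_of :: "nat \<Rightarrow> (nat \<Rightarrow> int) \<Rightarrow> nat set \<Rightarrow> cube" where
  "cube_of m l N = {x. (\<forall>j<m. real_of_int (l j) \<le> x j \<and>
                              x j \<le> real_of_int (l j) + (if j \<in> N then 1 else 0))
                        \<and> (\<forall>j\<ge>m. x j = 0)}"

definition elem_cube :: "nat \<Rightarrow> nat \<Rightarrow> cube \<Rightarrow> bool" where
  "elem_cube m k S \<longleftrightarrow> (\<exists>l N. N \<subseteq> {..<m} \<and> card N = k \<and> S = cube_of m l N)"

definition faces :: "nat \<Rightarrow> cube set" where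
  "faces m = {S. elem_cube m (m - 1) S}"

definition adjacent :: "nat \<Rightarrow> cube \<Rightarrow> cube \<Rightarrow> bool" where
  "adjacent m Q Q' \<longleftrightarrow> elem_cube m (m - 2) (Q \<inter> Q')"

definition Q0 :: "nat \<Rightarrow> cube" where
  "Q0 m = cube_of m (\<lambda>_. 0) {1..<m}"

text \<open>Product measure P_p on configurations omega : faces => bool (True = open).\<close>
definition face_perc :: "nat \<Rightarrow> real \<Rightarrow> (cube \<Rightarrow> bool) measure" where
  "face_perc m p = (\<Pi>\<^sub>M Q\<in>faces m. measure_pmf (bernoulli_pmf p))"

definition open_adj :: "nat \<Rightarrow> (cube \<Rightarrow> bool) \<Rightarrow> cube \<Rightarrow> cube \<Rightarrow> bool" where
  "open_adj m \<omega> Q Q' \<longleftrightarrow> Q \<in> faces m \<and> Q' \<in> faces m \<and> \<omega> Q \<and> \<omega> Q' \<and> adjacent m Q Q'"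

definition cluster :: "nat \<Rightarrow> (cube \<Rightarrow> bool) \<Rightarrow> cube \<Rightarrow> cube set" where
  "cluster m \<omega> Q = {Q'. Q \<in> faces m \<and> Q' \<in> faces m \<and> \<omega> Q \<and> \<omega> Q' \<and> (open_adj m \<omega>)\<^sup>*\<^sup>* Q Q'}"

definition theta_face :: "nat \<Rightarrow> real \<Rightarrow> real" where
  "theta_face m p = measure (face_perc m p)
     {\<omega> \<in> space (face_perc m p). infinite (cluster m \<omega> (Q0 m))}"

definition pc_face :: "nat \<Rightarrow> real" where
  "pc_face m = Inf {p. 0 \<le> p \<and> p \<le> 1 \<and> theta_face m p > 0}"

end

theory Submission
  imports Defs
begin

(* The faces Q x [0,1] of R^(d+1), for Q a face of R^d, form a copy of the face graph of R^d
   containing Q_0. Restricting a configuration of R^(d+1) to this copy gives a configuration of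
   R^d with law P_p, and its open cluster of Q_0 embeds into the open cluster of Q_0 in R^(d+1).
   So theta_d(p) <= theta_(d+1)(p) for every p, and the infima defining the critical points
   compare, provided the set for R^d is nonempty: at p = 1 every face is open, and the faces
   {0} x [k,k+1] x [0,1]^(d-2) form an infinite open chain through Q_0. *)

definition prism :: "nat \<Rightarrow> cube \<Rightarrow> cube" where
  "prism d Q = {x. (\<lambda>j. if j < d then x j else 0) \<in> Q \<and> 0 \<le> x d \<and> x d \<le> 1 \<and> (\<forall>j>d. x j = 0)}"

lemma prism_cube_of:
  assumes "N \<subseteq> {..<d}"
  shows "prism d (cube_of d l N) = cube_of (Suc d) (l(d := 0)) (insert d N)"
  using assms unfolding prism_def cube_of_def by (auto simp: less_Suc_eq)

lemma prism_Int: "prism d (Q \<inter> Q') = prism d Q \<inter> prism d Q'"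
  unfolding prism_def by auto

lemma elem_cube_prism:
  assumes "elem_cube d k S"
  shows "elem_cube (Suc d) (Suc k) (prism d S)"
proof -
  obtain l N where N: "N \<subseteq> {..<d}" "card N = k" "S = cube_of d l N"
    using assms unfolding elem_cube_def by blast
  then have "card (insert d N) = Suc k"
    by (auto simp: card_insert_if finite_subset)
  with N show ?thesis
    unfolding elem_cube_def
    by (auto simp: prism_cube_of intro!: exI[of _ "l(d := 0)"] exI[of _ "insert d N"])
qed

lemma elem_cube_vanishing: "elem_cube m k S \<Longrightarrow> x \<in> S \<Longrightarrow> m \<le> j \<Longrightarrow> x j = 0"
  unfolding elem_cube_def cube_of_def by auto

lemma slice_prism:
  assumes "\<And>x j. x \<in> Q \<Longrightarrow> d \<le> j \<Longrightarrow> x j = 0"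
  shows "{y \<in> prism d Q. y d = 0} = Q"
proof (intro set_eqI iffI)
  have restrict: "(\<lambda>j. if j < d then y j else 0) = y" if "\<forall>j\<ge>d. y j = 0" for y :: point
    using that by auto
  fix y
  {
    assume "y \<in> {y \<in> prism d Q. y d = 0}"
    then have "\<forall>j\<ge>d. y j = 0" "(\<lambda>j. if j < d then y j else 0) \<in> Q"
      unfolding prism_def by (auto simp: le_eq_less_or_eq)
    then show "y \<in> Q" by (simp add: restrict)
  next
    assume "y \<in> Q"
    moreover from this have "\<forall>j\<ge>d. y j = 0" using assms by blast
    ultimately show "y \<in> {y \<in> prism d Q. y d = 0}"
      unfolding prism_def by (simp add: restrict)
  }
qed

lemma inj_on_prism_faces: "inj_on (prism d) (faces d)"
proof (rule inj_onI)
  have slice: "{y \<in> prism d S. y d = 0} = S" if "S \<in> faces d" for S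
  proof (rule slice_prism)
    have "elem_cube d (d - 1) S" using that by (simp add: faces_def)
    then show "x j = 0" if "x \<in> S" "d \<le> j" for x j
      using that by (rule elem_cube_vanishing)
  qed
  fix Q Q' assume Q: "Q \<in> faces d" and Q': "Q' \<in> faces d" and eq: "prism d Q = prism d Q'"
  have "Q = {y \<in> prism d Q. y d = 0}"
    using slice[OF Q] by (rule sym)
  also have "\<dots> = Q'"
    unfolding eq by (rule slice[OF Q'])
  finally show "Q = Q'" .
qed

lemma prism_faces: "1 \<le> d \<Longrightarrow> Q \<in> faces d \<Longrightarrow> prism d Q \<in> faces (Suc d)"
  unfolding faces_def using elem_cube_prism[of d "d - 1" Q] by (simp add: Suc_diff_le)

lemma adjacent_prism:
  assumes "2 \<le> d" "adjacent d Q Q'"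
  shows "adjacent (Suc d) (prism d Q) (prism d Q')"
proof -
  have "Suc (d - 2) = Suc d - 2" using assms(1) by simp
  then show ?thesis
    using assms(2) elem_cube_prism[of d "d - 2" "Q \<inter> Q'"]
    unfolding adjacent_def by (simp add: prism_Int)
qed

lemma prism_Q0: "1 \<le> d \<Longrightarrow> prism d (Q0 d) = Q0 (Suc d)"
  unfolding Q0_def by (subst prism_cube_of) (auto intro!: arg_cong2[where f="cube_of (Suc d)"])

lemma Q0_faces: "Q0 m \<in> faces m"
proof -
  have "elem_cube m (m - 1) (Q0 m)"
    unfolding elem_cube_def Q0_def by (intro exI[of _ "\<lambda>_. 0"] exI[of _ "{1..<m}"]) auto
  then show ?thesis by (simp add: faces_def)
qed

lemma cube_of_cong: "(\<And>j. j < m \<Longrightarrow> l j = l' j) \<Longrightarrow> cube_of m l N = cube_of m l' N"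
  unfolding cube_of_def by simp

lemma countable_faces: "countable (faces m)"
proof -
  let ?cube = "\<lambda>(xs, N). cube_of m (\<lambda>j. xs ! j) N"
  have cover: "faces m \<subseteq> ?cube ` (UNIV \<times> Pow {..<m})"
  proof
    fix S assume "S \<in> faces m"
    then obtain l N where N: "N \<subseteq> {..<m}" "S = cube_of m l N"
      unfolding faces_def elem_cube_def by blast
    have "cube_of m l N = cube_of m (\<lambda>j. map l [0..<m] ! j) N"
      by (rule cube_of_cong) simp
    with N(2) have "S = ?cube (map l [0..<m], N)"
      by simp
    moreover have "(map l [0..<m], N) \<in> UNIV \<times> Pow {..<m}"
      using N(1) by simp
    ultimately show "S \<in> ?cube ` (UNIV \<times> Pow {..<m})"
      by (rule image_eqI)
  qed
  have "countable ((UNIV :: int list set) \<times> Pow {..<m})"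
    by (rule countable_SIGMA) (simp_all add: countable_finite)
  then have "countable (?cube ` (UNIV \<times> Pow {..<m}))"
    by (rule countable_image)
  with cover show ?thesis
    by (rule countable_subset)
qed

lemma pred_Bex_countable:
  assumes "countable X" "\<And>i. i \<in> X \<Longrightarrow> Measurable.pred M (\<lambda>x. P x i)"
  shows "Measurable.pred M (\<lambda>x. \<exists>i\<in>X. P x i)"
  using assms unfolding pred_def by (intro sets.sets_Collect_countable_Ex') auto

lemma pred_rtranclp_countable:
  assumes "countable X"
    and "\<And>\<omega> a b. R \<omega> a b \<Longrightarrow> a \<in> X"
    and "\<And>a b. Measurable.pred M (\<lambda>\<omega>. R \<omega> a b)"
  shows "Measurable.pred M (\<lambda>\<omega>. (R \<omega>)\<^sup>*\<^sup>* a b)"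
proof -
  have "Measurable.pred M (\<lambda>\<omega>. (R \<omega> ^^ n) a c)" for n c
  proof (induction n arbitrary: c)
    case 0
    show ?case by simp
  next
    case (Suc n)
    have "(R \<omega> ^^ Suc n) a c \<longleftrightarrow> (\<exists>b\<in>X. (R \<omega> ^^ n) a b \<and> R \<omega> b c)" for \<omega>
      using assms(2) by (auto simp: OO_def)
    then show ?case
      using Suc assms(1,3) by (simp add: pred_Bex_countable pred_intros_logic(3))
  qed
  then show ?thesis
    unfolding rtranclp_power by (rule pred_intros_countable(2))
qed

lemma infinite_iff_to_nat_on_unbounded:
  assumes "countable X" "A \<subseteq> X"
  shows "infinite A \<longleftrightarrow> (\<forall>n. \<exists>x\<in>A. n \<le> to_nat_on X x)"
proof -
  have "inj_on (to_nat_on X) A"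
    using inj_on_to_nat_on[OF assms(1)] assms(2) by (rule inj_on_subset)
  then have "infinite A \<longleftrightarrow> infinite (to_nat_on X ` A)"
    using finite_imageD by blast
  also have "\<dots> \<longleftrightarrow> (\<forall>n. \<exists>x\<in>A. n \<le> to_nat_on X x)"
    unfolding infinite_nat_iff_unbounded_le by blast
  finally show ?thesis .
qed

lemma pred_infinite_countable:
  assumes "countable X" "\<And>x. x \<in> X \<Longrightarrow> Measurable.pred M (\<lambda>\<omega>. P \<omega> x)"
  shows "Measurable.pred M (\<lambda>\<omega>. infinite {x \<in> X. P \<omega> x})"
proof -
  have "infinite {x \<in> X. P \<omega> x} \<longleftrightarrow> (\<forall>n. \<exists>x\<in>X. n \<le> to_nat_on X x \<and> P \<omega> x)" for \<omega>
    using infinite_iff_to_nat_on_unbounded[OF assms(1), of "{x \<in> X. P \<omega> x}"] by auto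
  then show ?thesis
    using assms by (simp add: pred_intros_countable(1) pred_Bex_countable)
qed

lemma pred_face_open:
  assumes "Q \<in> faces m"
  shows "Measurable.pred (face_perc m p) (\<lambda>\<omega>. \<omega> Q)"
proof -
  have "(\<lambda>\<omega>. \<omega> Q) \<in> face_perc m p \<rightarrow>\<^sub>M measure_pmf (bernoulli_pmf p)"
    unfolding face_perc_def using assms by (rule measurable_component_singleton)
  then show ?thesis
    by (simp add: measurable_cong_sets)
qed

lemma pred_open_adj: "Measurable.pred (face_perc m p) (\<lambda>\<omega>. open_adj m \<omega> Q Q')"
  unfolding open_adj_def using pred_face_open by (cases "Q \<in> faces m \<and> Q' \<in> faces m") auto

lemma cluster_Q0_eq:
  "cluster m \<omega> (Q0 m) = {Q \<in> faces m. \<omega> (Q0 m) \<and> \<omega> Q \<and> (open_adj m \<omega>)\<^sup>*\<^sup>* (Q0 m) Q}"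
  unfolding cluster_def using Q0_faces by auto

lemma sets_infinite_cluster:
  "{\<omega> \<in> space (face_perc m p). infinite (cluster m \<omega> (Q0 m))} \<in> sets (face_perc m p)"
proof -
  have "Measurable.pred (face_perc m p) (\<lambda>\<omega>. (open_adj m \<omega>)\<^sup>*\<^sup>* (Q0 m) Q)" for Q
    by (rule pred_rtranclp_countable[OF countable_faces[of m] _ pred_open_adj]) (simp add: open_adj_def)
  then have "Measurable.pred (face_perc m p) (\<lambda>\<omega>. infinite (cluster m \<omega> (Q0 m)))"
    unfolding cluster_Q0_eq using countable_faces
    by (intro pred_infinite_countable) (auto intro!: pred_intros_logic(3) pred_face_open Q0_faces)
  then show ?thesis
    by (simp add: pred_def)
qed

lemma cluster_faces: "cluster m \<omega> Q \<subseteq> faces m"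
  unfolding cluster_def by auto

lemma rtranclp_open_adj_prism:
  assumes "2 \<le> d" "(open_adj d (\<lambda>Q\<in>faces d. \<omega> (prism d Q)))\<^sup>*\<^sup>* Q Q'"
  shows "(open_adj (Suc d) \<omega>)\<^sup>*\<^sup>* (prism d Q) (prism d Q')"
  using assms(2)
proof (induction rule: rtranclp_induct)
  case base
  show ?case by simp
next
  case (step Q' Q'')
  then have "open_adj (Suc d) \<omega> (prism d Q') (prism d Q'')"
    using assms(1) prism_faces adjacent_prism unfolding open_adj_def by auto
  with step.IH show ?case by (rule rtranclp.rtrancl_into_rtrancl)
qed

lemma prism_cluster_subset:
  assumes "2 \<le> d"
  shows "prism d ` cluster d (\<lambda>Q\<in>faces d. \<omega> (prism d Q)) (Q0 d)
           \<subseteq> cluster (Suc d) \<omega> (Q0 (Suc d))"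
proof
  fix Q' assume "Q' \<in> prism d ` cluster d (\<lambda>Q\<in>faces d. \<omega> (prism d Q)) (Q0 d)"
  then obtain Q where Q: "Q' = prism d Q" "Q \<in> cluster d (\<lambda>Q\<in>faces d. \<omega> (prism d Q)) (Q0 d)"
    by blast
  then have "Q \<in> faces d" "\<omega> (prism d (Q0 d))" "\<omega> (prism d Q)"
    "(open_adj (Suc d) \<omega>)\<^sup>*\<^sup>* (prism d (Q0 d)) (prism d Q)"
    using Q0_faces rtranclp_open_adj_prism[OF assms] unfolding cluster_def by auto
  with Q(1) show "Q' \<in> cluster (Suc d) \<omega> (Q0 (Suc d))"
    using assms prism_faces prism_Q0 Q0_faces unfolding cluster_def by auto
qed

lemma infinite_cluster_prism:
  assumes "2 \<le> d" "infinite (cluster d (\<lambda>Q\<in>faces d. \<omega> (prism d Q)) (Q0 d))"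
  shows "infinite (cluster (Suc d) \<omega> (Q0 (Suc d)))"
proof -
  have "inj_on (prism d) (cluster d (\<lambda>Q\<in>faces d. \<omega> (prism d Q)) (Q0 d))"
    using inj_on_prism_faces cluster_faces by (rule inj_on_subset)
  then show ?thesis
    using assms(2) prism_cluster_subset[OF assms(1)] finite_imageD finite_subset by metis
qed

lemma prob_space_face_perc: "prob_space (face_perc m p)"
  unfolding face_perc_def by (rule prob_space_PiM) (rule prob_space_measure_pmf)

lemma measurable_prism_restrict:
  assumes "1 \<le> d"
  shows "(\<lambda>\<omega>. \<lambda>Q\<in>faces d. \<omega> (prism d Q)) \<in> face_perc (Suc d) p \<rightarrow>\<^sub>M face_perc d p"
  unfolding face_perc_def using prism_faces[OF assms]
  by (auto intro!: measurable_restrict measurable_component_singleton)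

lemma distr_face_perc_prism:
  assumes "1 \<le> d"
  shows "distr (face_perc (Suc d) p) (face_perc d p) (\<lambda>\<omega>. \<lambda>Q\<in>faces d. \<omega> (prism d Q))
           = face_perc d p"
  unfolding face_perc_def using prism_faces[OF assms]
  by (intro distr_PiM_reindex) (auto simp: prob_space_measure_pmf inj_on_prism_faces)

lemma theta_face_le_Suc:
  assumes "2 \<le> d"
  shows "theta_face d p \<le> theta_face (Suc d) p"
proof -
  interpret prob_space "face_perc (Suc d) p" by (rule prob_space_face_perc)
  let ?\<pi> = "\<lambda>\<omega>. \<lambda>Q\<in>faces d. \<omega> (prism d Q)"
  let ?A = "{\<omega> \<in> space (face_perc d p). infinite (cluster d \<omega> (Q0 d))}"
  have "theta_face d p = prob (?\<pi> -` ?A \<inter> space (face_perc (Suc d) p))"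
    using assms measure_distr[OF measurable_prism_restrict sets_infinite_cluster]
    unfolding theta_face_def by (simp add: distr_face_perc_prism)
  also have "\<dots> \<le> theta_face (Suc d) p"
    unfolding theta_face_def
    using infinite_cluster_prism[OF assms] by (intro finite_measure_mono sets_infinite_cluster) auto
  finally show ?thesis .
qed

lemma cube_of_Int_translate:
  assumes "i \<in> N" "i < m"
  shows "cube_of m l N \<inter> cube_of m (l(i := l i + 1)) N = cube_of m (l(i := l i + 1)) (N - {i})"
proof -
  have pointwise: "(real_of_int (l j) \<le> x j \<and> x j \<le> real_of_int (l j) + (if j \<in> N then 1 else 0)) \<and>
        (real_of_int ((l(i := l i + 1)) j) \<le> x j \<and>
         x j \<le> real_of_int ((l(i := l i + 1)) j) + (if j \<in> N then 1 else 0)) \<longleftrightarrow>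
        real_of_int ((l(i := l i + 1)) j) \<le> x j \<and>
        x j \<le> real_of_int ((l(i := l i + 1)) j) + (if j \<in> N - {i} then 1 else 0)" for j x
    using assms by auto
  show ?thesis
    unfolding cube_of_def using pointwise
    by (intro set_eqI) (simp only: Int_iff mem_Collect_eq; blast)
qed

lemma cube_of_eq_imp_corner_eq:
  assumes "cube_of m l N = cube_of m l' N'" "j < m"
  shows "l j = l' j"
proof -
  have corner: "(\<lambda>j. if j < m then real_of_int (l j) else 0) \<in> cube_of m l N" for l N
    unfolding cube_of_def by auto
  have "(\<lambda>j. if j < m then real_of_int (l j) else 0) \<in> cube_of m l' N'"
    "(\<lambda>j. if j < m then real_of_int (l' j) else 0) \<in> cube_of m l N"
    using corner[of l N] corner[of l' N'] assms(1) by simp_all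
  then have "real_of_int (l' j) \<le> l j" "real_of_int (l j) \<le> l' j"
    using assms(2) unfolding cube_of_def by auto
  then show ?thesis by simp
qed

definition face_chain :: "nat \<Rightarrow> nat \<Rightarrow> cube" where
  "face_chain d k = cube_of d ((\<lambda>_. 0)(1 := int k)) {1..<d}"

lemma face_chain_0: "face_chain d 0 = Q0 d"
  unfolding face_chain_def Q0_def by (simp add: fun_upd_idem)

lemma face_chain_faces: "face_chain d k \<in> faces d"
proof -
  have "elem_cube d (d - 1) (face_chain d k)"
    unfolding elem_cube_def face_chain_def
    by (intro exI[of _ "(\<lambda>_. 0)(1 := int k)"] exI[of _ "{1..<d}"]) auto
  then show ?thesis by (simp add: faces_def)
qed

lemma adjacent_face_chain:
  assumes "2 \<le> d"
  shows "adjacent d (face_chain d k) (face_chain d (Suc k))"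
proof -
  let ?l = "(\<lambda>_. 0)(1 := int k) :: nat \<Rightarrow> int"
  let ?l' = "?l(1 := ?l 1 + 1)"
  have next_face: "face_chain d (Suc k) = cube_of d ?l' {1..<d}"
    unfolding face_chain_def by (simp add: add.commute)
  have "face_chain d k \<inter> face_chain d (Suc k) = cube_of d ?l' ({1..<d} - {1})"
    unfolding next_face face_chain_def[of d k] using assms by (intro cube_of_Int_translate) auto
  moreover have "elem_cube d (d - 2) (cube_of d ?l' ({1..<d} - {1}))"
    unfolding elem_cube_def using assms
    by (intro exI[of _ ?l'] exI[of _ "{1..<d} - {1}"]) (auto simp: card_Diff_singleton)
  ultimately show ?thesis
    unfolding adjacent_def by simp
qed

lemma inj_face_chain:
  assumes "2 \<le> d"
  shows "inj (face_chain d)"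
proof (rule injI)
  fix k k' assume "face_chain d k = face_chain d k'"
  then show "k = k'"
    using assms cube_of_eq_imp_corner_eq[of d "(\<lambda>_. 0)(1 := int k)" "{1..<d}"
        "(\<lambda>_. 0)(1 := int k')" "{1..<d}" 1]
    unfolding face_chain_def by simp
qed

lemma infinite_cluster_all_open:
  assumes "2 \<le> d" "\<forall>Q\<in>faces d. \<omega> Q"
  shows "infinite (cluster d \<omega> (Q0 d))"
proof -
  have "(open_adj d \<omega>)\<^sup>*\<^sup>* (Q0 d) (face_chain d k)" for k
  proof (induction k)
    case 0
    show ?case by (simp add: face_chain_0)
  next
    case (Suc k)
    moreover have "open_adj d \<omega> (face_chain d k) (face_chain d (Suc k))"
      unfolding open_adj_def using assms face_chain_faces adjacent_face_chain by blast
    ultimately show ?case by (rule rtranclp.rtrancl_into_rtrancl)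
  qed
  then have "range (face_chain d) \<subseteq> cluster d \<omega> (Q0 d)"
    unfolding cluster_def using assms(2) Q0_faces face_chain_faces by auto
  moreover have "infinite (range (face_chain d))"
    using inj_face_chain[OF assms(1)] by (rule range_inj_infinite)
  ultimately show ?thesis
    using infinite_super by blast
qed

lemma theta_face_one:
  assumes "2 \<le> d"
  shows "theta_face d 1 = 1"
proof -
  interpret product_prob_space "\<lambda>_. measure_pmf (bernoulli_pmf 1)" "faces d"
    by (rule product_prob_spaceI) (rule prob_space_measure_pmf)
  interpret face_perc: prob_space "face_perc d 1" by (rule prob_space_face_perc)
  have "AE b in bernoulli_pmf 1. b"
  proof (subst AE_measure_pmf_iff, intro ballI)
    fix b assume "b \<in> set_pmf (bernoulli_pmf 1)"
    then have "pmf (bernoulli_pmf 1) b \<noteq> 0" by (simp add: set_pmf_iff)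
    then show b by (cases b) simp_all
  qed
  then have "AE \<omega> in face_perc d 1. \<omega> Q" if "Q \<in> faces d" for Q
    unfolding face_perc_def using that by (intro AE_component)
  then have "AE \<omega> in face_perc d 1. \<forall>Q\<in>faces d. \<omega> Q"
    by (subst AE_ball_countable[OF countable_faces]) blast
  then have "AE \<omega> in face_perc d 1. infinite (cluster d \<omega> (Q0 d))"
    by eventually_elim (rule infinite_cluster_all_open[OF assms])
  then show ?thesis
    unfolding theta_face_def using face_perc.prob_Collect_eq_1[OF sets_infinite_cluster] by simp
qed

theorem proposition2p10:
  fixes d :: nat
  assumes "d \<ge> 2"
  shows "pc_face (d + 1) \<le> pc_face d"
proof -
  let ?S = "\<lambda>m. {p. 0 \<le> p \<and> p \<le> 1 \<and> theta_face m p > 0}"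
  (* Inf of an empty set of reals is unspecified, so monotonicity of Inf needs a witness. *)
  have "1 \<in> ?S d"
    using theta_face_one[OF assms] by simp
  moreover have "?S d \<subseteq> ?S (d + 1)"
    using theta_face_le_Suc[OF assms] by (auto intro: less_le_trans)
  moreover have "bdd_below (?S (d + 1))"
    by (rule bdd_belowI[of _ 0]) simp
  ultimately show ?thesis
    unfolding pc_face_def by (intro cInf_superset_mono) auto
qed

end
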